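(* Let $t$ be a positive integer and $w$ an integer with $\lceil (t+1)/2\rceil\le w\le t$. Then $$ma_t(w)\ge \frac{w}{2t}+\frac{\lfloor (t-1)/2\rfloor}{2t}.$$
   Context: A voter matrix with $t$ topics is a matrix $V\in\{Y,N\}^{n\times t}$ for some positive integer $n$ (rows are voters), subject to the standing assumption that in every column the number of entries $Y$ is at least the number of entries $N$. $\mathcal{V}_t$ is the set of all voter matrices with $t$ topics and any number of voters. A proposal is a vector $p\in\{Y,N\}^t$. A voter $v$ supports $p$ if the Hamming distance between $v$ and $p$ is at most $t/2$; $p$ is supported by $V$ if at least $n/2$ rows of $V$ support $p$. $md_V$ is the maximum number of entries $Y$ of a proposal supported by $V$. $m_V$ denotes the fraction of entries $Y$ among all $nt$ entries of $V$. For an integer $w$ with $\lceil (t+1)/2\rceil\le w\le t$, $ma_t(w)$ is the supremum of $m_V$ over all $V\in\mathcal{V}_t$ with $md_V<w$, with the convention that $ma_t(w)=\frac12$ if no such $V$ exists. *)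

theory Defs
  imports Complex_Main
begin

text \<open>A voter matrix with t topics and n voters is represented by V :: nat => nat => bool,
  V i j = True meaning entry Y for voter i (i < n) and topic j (j < t); only entries with
  i < n, j < t are relevant. A proposal is p :: nat => bool (only j < t relevant).\<close>

definition voter_matrix :: "nat \<Rightarrow> nat \<Rightarrow> (nat \<Rightarrow> nat \<Rightarrow> bool) \<Rightarrow> bool" where
  "voter_matrix t n V \<longleftrightarrow> 0 < n \<and>
     (\<forall>j<t. card {i. i < n \<and> \<not> V i j} \<le> card {i. i < n \<and> V i j})"

definition hamming :: "nat \<Rightarrow> (nat \<Rightarrow> bool) \<Rightarrow> (nat \<Rightarrow> bool) \<Rightarrow> nat" where
  "hamming t v p = card {j. j < t \<and> v j \<noteq> p j}"

definition supports :: "nat \<Rightarrow> (nat \<Rightarrow> bool) \<Rightarrow> (nat \<Rightarrow> bool) \<Rightarrow> bool" where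
  "supports t v p \<longleftrightarrow> real (hamming t v p) \<le> real t / 2"

definition supported :: "nat \<Rightarrow> nat \<Rightarrow> (nat \<Rightarrow> nat \<Rightarrow> bool) \<Rightarrow> (nat \<Rightarrow> bool) \<Rightarrow> bool" where
  "supported t n V p \<longleftrightarrow> real (card {i. i < n \<and> supports t (V i) p}) \<ge> real n / 2"

definition num_yes :: "nat \<Rightarrow> (nat \<Rightarrow> bool) \<Rightarrow> nat" where
  "num_yes t p = card {j. j < t \<and> p j}"

definition md :: "nat \<Rightarrow> nat \<Rightarrow> (nat \<Rightarrow> nat \<Rightarrow> bool) \<Rightarrow> nat" where
  "md t n V = Max {num_yes t p | p. supported t n V p}"

definition mfrac :: "nat \<Rightarrow> nat \<Rightarrow> (nat \<Rightarrow> nat \<Rightarrow> bool) \<Rightarrow> real" where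
  "mfrac t n V = real (card {(i, j). i < n \<and> j < t \<and> V i j}) / (real n * real t)"

definition ma :: "nat \<Rightarrow> nat \<Rightarrow> real" where
  "ma t w = (let S = {mfrac t n V | n V. voter_matrix t n V \<and> md t n V < w}
             in if S = {} then 1/2 else Sup S)"

end

theory Submission
  imports Defs "HOL-Real_Asymp.Real_Asymp"
begin

text \<open>Write \<open>w = a + \<lfloor>t/2\<rfloor> + 1\<close>; the bound is \<open>(a + t)/(2t)\<close>. For \<open>a = 0\<close> it is \<open>1/2\<close>, which
  every voter matrix attains since each column has a majority of entries Y. For \<open>a \<ge> 1\<close> take
  \<open>2m + 1\<close> voters: \<open>t\<close> of them approve exactly one topic each (one per topic), \<open>m + 1 - t\<close>
  approve exactly the first \<open>a\<close> topics, and \<open>m\<close> approve everything. The first \<open>m + 1\<close> voters form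
  a strict majority and approve at most \<open>a\<close> topics each, so any supported proposal is within
  Hamming distance \<open>\<lfloor>t/2\<rfloor>\<close> of one of them and has fewer than \<open>w\<close> entries Y. The fraction of
  entries Y tends to \<open>(a + t)/(2t)\<close> as \<open>m \<rightarrow> \<infinity>\<close>.\<close>

lemma finite_yes_entries: "finite {(i, j). i < (n::nat) \<and> j < (t::nat) \<and> V i j}"
  by (rule finite_subset[of _ "{..<n} \<times> {..<t}"]) auto

lemma card_yes_entries_le: "card {(i, j). i < n \<and> j < t \<and> V i j} \<le> n * t"
proof -
  have "card {(i, j). i < n \<and> j < t \<and> V i j} \<le> card ({..<n} \<times> {..<t})"
    by (rule card_mono) auto
  then show ?thesis
    by (simp add: card_cartesian_product)
qed

lemma card_yes_entries_eq_sum_columns: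
  fixes n t :: nat
  shows "card {(i, j). i < n \<and> j < t \<and> V i j} = (\<Sum>j<t. card {i. i < n \<and> V i j})"
proof -
  have "{(i, j). i < n \<and> j < t \<and> V i j} = prod.swap ` (SIGMA j:{..<t}. {i. i < n \<and> V i j})"
    by auto
  then have "card {(i, j). i < n \<and> j < t \<and> V i j} = card (SIGMA j:{..<t}. {i. i < n \<and> V i j})"
    by (simp add: card_image)
  also have "\<dots> = (\<Sum>j<t. card {i. i < n \<and> V i j})"
    by (rule card_SigmaI) auto
  finally show ?thesis .
qed

lemma mfrac_le_1: "mfrac t n V \<le> 1"
  using card_yes_entries_le[of n t V]
  by (cases "n * t = 0") (auto simp: mfrac_def divide_le_eq simp flip: of_nat_mult)

lemma mfrac_ge_half:
  assumes "voter_matrix t n V" and "0 < t"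
  shows "1/2 \<le> mfrac t n V"
proof -
  have "0 < n"
    using assms(1) by (simp add: voter_matrix_def)
  have column: "n \<le> 2 * card {i. i < n \<and> V i j}" if "j < t" for j
  proof -
    have "card {i. i < n \<and> V i j} + card {i. i < n \<and> \<not> V i j}
        = card ({i. i < n \<and> V i j} \<union> {i. i < n \<and> \<not> V i j})"
      by (rule card_Un_disjoint[symmetric]) auto
    also have "{i. i < n \<and> V i j} \<union> {i. i < n \<and> \<not> V i j} = {..<n}"
      by auto
    finally show ?thesis
      using assms(1) that by (auto simp: voter_matrix_def)
  qed
  have "t * n \<le> 2 * card {(i, j). i < n \<and> j < t \<and> V i j}"
    using sum_mono[of "{..<t}" "\<lambda>_. n" "\<lambda>j. 2 * card {i. i < n \<and> V i j}"] column
    by (simp add: card_yes_entries_eq_sum_columns sum_distrib_left)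
  then have "real t * real n \<le> 2 * real (card {(i, j). i < n \<and> j < t \<and> V i j})"
    by (metis of_nat_le_iff of_nat_mult of_nat_numeral)
  then show ?thesis
    using \<open>0 < n\<close> \<open>0 < t\<close> by (simp add: mfrac_def le_divide_eq mult.commute)
qed

lemma mfrac_le_ma:
  assumes "voter_matrix t n V" and "md t n V < w"
  shows "mfrac t n V \<le> ma t w"
proof -
  define S where "S = {mfrac t n V | n V. voter_matrix t n V \<and> md t n V < w}"
  have "mfrac t n V \<in> S"
    using assms unfolding S_def by blast
  moreover have "bdd_above S"
    unfolding S_def by (rule bdd_aboveI[of _ 1]) (auto simp: mfrac_le_1)
  ultimately show ?thesis
    by (auto simp: ma_def S_def[symmetric] intro: cSup_upper)
qed

lemma ma_ge_half:
  assumes "0 < t"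
  shows "1/2 \<le> ma t w"
proof (cases "\<exists>n V. voter_matrix t n V \<and> md t n V < w")
  case True
  then obtain n V where "voter_matrix t n V" "md t n V < w"
    by blast
  then show ?thesis
    using mfrac_ge_half[OF _ assms] mfrac_le_ma by (meson order.trans)
qed (simp add: ma_def)

lemma num_yes_le_add_hamming: "num_yes t p \<le> num_yes t v + hamming t v p"
proof -
  have "num_yes t p \<le> card ({j. j < t \<and> v j} \<union> {j. j < t \<and> v j \<noteq> p j})"
    unfolding num_yes_def by (rule card_mono) auto
  also have "\<dots> \<le> num_yes t v + hamming t v p"
    unfolding num_yes_def hamming_def by (rule card_Un_le)
  finally show ?thesis .
qed

lemma supports_iff_hamming_le: "supports t v p \<longleftrightarrow> hamming t v p \<le> t div 2"
  unfolding supports_def by linarith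

lemma md_le_if_majority_bounded:
  assumes majority: "n < 2 * card {i. i < n \<and> num_yes t (V i) \<le> b}"
    and "b \<le> t div 2" \<comment> \<open>makes the all-N proposal supported, so \<open>md\<close> is a Max over a nonempty set\<close>
  shows "md t n V \<le> b + t div 2"
proof -
  let ?B = "{i. i < n \<and> num_yes t (V i) \<le> b}"
  have "supports t (V i) (\<lambda>_. False)" if "i \<in> ?B" for i
    using that \<open>b \<le> t div 2\<close>
    by (simp add: supports_iff_hamming_le hamming_def num_yes_def)
  then have "card ?B \<le> card {i. i < n \<and> supports t (V i) (\<lambda>_. False)}"
    by (intro card_mono) auto
  then have "supported t n V (\<lambda>_. False)"
    using majority by (simp add: supported_def)
  moreover have "num_yes t p \<le> b + t div 2" if "supported t n V p" for p
  proof -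
    let ?A = "{i. i < n \<and> supports t (V i) p}"
    have "?A \<inter> ?B \<noteq> {}"
    proof
      assume "?A \<inter> ?B = {}"
      then have "card ?A + card ?B = card (?A \<union> ?B)"
        by (simp add: card_Un_disjoint)
      also have "\<dots> \<le> n"
        using card_mono[of "{..<n}" "?A \<union> ?B"] by auto
      finally show False
        using that majority by (simp add: supported_def)
    qed
    then obtain i where "supports t (V i) p" "num_yes t (V i) \<le> b"
      by blast
    then show ?thesis
      using num_yes_le_add_hamming[of t p "V i"] by (simp add: supports_iff_hamming_le)
  qed
  moreover have "finite {num_yes t p | p. supported t n V p}"
  proof (rule finite_subset[of _ "{..t}"])
    show "{num_yes t p | p. supported t n V p} \<subseteq> {..t}"
      using card_mono[of "{..<t}" "{j. j < t \<and> p j}" for p] by (auto simp: num_yes_def)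
  qed simp
  ultimately show ?thesis
    unfolding md_def by (subst Max_le_iff) auto
qed

definition witness_matrix :: "nat \<Rightarrow> nat \<Rightarrow> nat \<Rightarrow> nat \<Rightarrow> nat \<Rightarrow> bool" where
  "witness_matrix t a m i j \<longleftrightarrow> (if i < t then j = i else if i \<le> m then j < a else True)"

lemma voter_matrix_witness_matrix:
  assumes "t \<le> m"
  shows "voter_matrix t (2 * m + 1) (witness_matrix t a m)"
  unfolding voter_matrix_def
proof (intro conjI allI impI)
  fix j assume "j < t"
  have "card {i. i < 2 * m + 1 \<and> \<not> witness_matrix t a m i j} \<le> card ({..m} - {j})"
    using \<open>j < t\<close> assms by (intro card_mono) (auto simp: witness_matrix_def)
  also have "\<dots> = card (insert j {m + 1..<2 * m + 1}) - 1"
    using \<open>j < t\<close> assms by simp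
  also have "\<dots> \<le> card {i. i < 2 * m + 1 \<and> witness_matrix t a m i j}"
    using \<open>j < t\<close> assms by (intro diff_le_self[THEN order.trans] card_mono) (auto simp: witness_matrix_def)
  finally show "card {i. i < 2 * m + 1 \<and> \<not> witness_matrix t a m i j}
      \<le> card {i. i < 2 * m + 1 \<and> witness_matrix t a m i j}" .
qed simp

lemma num_yes_witness_matrix_le:
  assumes "1 \<le> a" and "i \<le> m"
  shows "num_yes t (witness_matrix t a m i) \<le> a"
proof (cases "i < t")
  case True
  then have "num_yes t (witness_matrix t a m i) \<le> card {i}"
    unfolding num_yes_def by (intro card_mono) (auto simp: witness_matrix_def)
  then show ?thesis
    using assms(1) by simp
next
  case False
  then have "num_yes t (witness_matrix t a m i) \<le> card {..<a}"
    unfolding num_yes_def using assms(2) by (intro card_mono) (auto simp: witness_matrix_def)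
  then show ?thesis
    by simp
qed

lemma md_witness_matrix_le:
  assumes "1 \<le> a" and "a \<le> t div 2"
  shows "md t (2 * m + 1) (witness_matrix t a m) \<le> a + t div 2"
proof (rule md_le_if_majority_bounded[OF _ assms(2)])
  have "card {..m} \<le> card {i. i < 2 * m + 1 \<and> num_yes t (witness_matrix t a m i) \<le> a}"
    using num_yes_witness_matrix_le[OF assms(1)] by (intro card_mono) auto
  then show "2 * m + 1 < 2 * card {i. i < 2 * m + 1 \<and> num_yes t (witness_matrix t a m i) \<le> a}"
    by simp
qed

lemma card_yes_entries_witness_matrix_ge:
  assumes "t \<le> m" and "a \<le> t"
  shows "m * t + (m + 1 - t) * a
    \<le> card {(i, j). i < 2 * m + 1 \<and> j < t \<and> witness_matrix t a m i j}"
proof -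
  have "m * t + (m + 1 - t) * a = card ({m + 1..<2 * m + 1} \<times> {..<t} \<union> {t..m} \<times> {..<a})"
    by (subst card_Un_disjoint) (auto simp: card_cartesian_product)
  also have "\<dots> \<le> card {(i, j). i < 2 * m + 1 \<and> j < t \<and> witness_matrix t a m i j}"
    using assms by (intro card_mono finite_yes_entries) (auto simp: witness_matrix_def)
  finally show ?thesis .
qed

lemma mfrac_witness_matrix_ge:
  assumes "0 < t" and "t \<le> m" and "a \<le> t"
  shows "(real m * t + (real m + 1 - t) * a) / ((2 * real m + 1) * t)
    \<le> mfrac t (2 * m + 1) (witness_matrix t a m)"
proof -
  have "real m * t + (real m + 1 - t) * a = real (m * t + (m + 1 - t) * a)"
    using assms(2) by (simp add: of_nat_diff)
  also have "\<dots> \<le> card {(i, j). i < 2 * m + 1 \<and> j < t \<and> witness_matrix t a m i j}"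
    using card_yes_entries_witness_matrix_ge[OF assms(2,3)] by linarith
  finally have yes_entries: "real m * t + (real m + 1 - t) * a
      \<le> card {(i, j). i < 2 * m + 1 \<and> j < t \<and> witness_matrix t a m i j}" .
  have denominator: "real (2 * m + 1) * real t = (2 * real m + 1) * t"
    by simp
  show ?thesis
    unfolding mfrac_def denominator by (rule divide_right_mono[OF yes_entries]) simp
qed

lemma ma_ge_witness_density:
  assumes "0 < t" and "1 \<le> a" and "a \<le> t div 2" and "a + t div 2 < w"
  shows "(real a + t) / (2 * t) \<le> ma t w"
proof (rule LIMSEQ_le_const2)
  show "(\<lambda>m. (real m * t + (real m + 1 - t) * a) / ((2 * real m + 1) * t)) \<longlonglongrightarrow> (real a + t) / (2 * t)"
    using assms(1) by real_asymp (simp add: field_simps)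
  have "(real m * t + (real m + 1 - t) * a) / ((2 * real m + 1) * t) \<le> ma t w" if "t \<le> m" for m
  proof -
    have "md t (2 * m + 1) (witness_matrix t a m) < w"
      using md_witness_matrix_le[OF assms(2,3)] assms(4) by (meson le_less_trans)
    then have "mfrac t (2 * m + 1) (witness_matrix t a m) \<le> ma t w"
      using mfrac_le_ma voter_matrix_witness_matrix[OF that] by blast
    moreover have "a \<le> t"
      using assms(3) by simp
    ultimately show ?thesis
      using mfrac_witness_matrix_ge[OF assms(1) that \<open>a \<le> t\<close>] by linarith
  qed
  then show "\<exists>N. \<forall>m\<ge>N. (real m * t + (real m + 1 - t) * a) / ((2 * real m + 1) * t) \<le> ma t w"
    by blast
qed

theorem lemma5p9:
  fixes t w :: nat
  assumes "0 < t"
    and "\<lceil>(real t + 1) / 2\<rceil> \<le> int w"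
    and "w \<le> t"
  shows "ma t w \<ge> real w / (2 * real t) + real_of_int \<lfloor>(real t - 1) / 2\<rfloor> / (2 * real t)"
proof -
  define k where "k = t div 2"
  have "t = 2 * k \<or> t = 2 * k + 1"
    unfolding k_def by linarith
  then have parity: "real t = 2 * real k \<or> real t = 2 * real k + 1"
    by auto
  have "\<lceil>(real t + 1) / 2\<rceil> = int k + 1"
    by (rule ceiling_unique) (use parity in auto)
  then have "k < w"
    using assms(2) by linarith
  define a where "a = w - k - 1"
  have "\<lfloor>(real t - 1) / 2\<rfloor> = int t - int k - 1"
    by (rule floor_unique) (use parity assms(1) in auto)
  then have bound: "real w / (2 * real t) + real_of_int \<lfloor>(real t - 1) / 2\<rfloor> / (2 * real t)
      = (real a + t) / (2 * t)"
    using \<open>k < w\<close> assms(1) by (simp add: a_def field_simps of_nat_diff)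
  show ?thesis
  proof (cases "a = 0")
    case True
    then show ?thesis
      unfolding bound using ma_ge_half[OF assms(1)] assms(1) by simp
  next
    case False
    then have "a \<le> t div 2" "a + t div 2 < w"
      using \<open>k < w\<close> assms(3) parity unfolding a_def k_def by linarith+
    with False show ?thesis
      unfolding bound by (intro ma_ge_witness_density[OF assms(1)]) auto
  qed
qed

end
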